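(* Let $p,m,n\in\mathbb{R}$, $a,b,c\in\mathbb{O}$, and $$\mathcal{A}=\begin{pmatrix}p&a&\overline{b}\\ \overline{a}&m&c\\ b&\overline{c}&n\end{pmatrix}.$$ Suppose $v=(x,y,z)^T\in\mathbb{O}^3\setminus\{0\}$ and $\lambda\in\mathbb{O}$ satisfy $\mathcal{A}v=v\lambda$. Then $$\mathrm{Im}(\lambda)=\frac{[x,a,y]+[z,b,x]+[y,c,z]}{|x|^2+|y|^2+|z|^2},$$ and if moreover $|x|^2+|y|^2\neq|z|^2$, $$\mathrm{Re}(\lambda)=\frac{p|x|^2+m|y|^2-n|z|^2+2\,x\cdot(ay)}{|x|^2+|y|^2-|z|^2}.$$ In particular, if $|x|^2+|y|^2+|z|^2=1$ then $\mathrm{Im}(\lambda)=[x,a,y]+[z,b,x]+[y,c,z]$.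
   Context: $\mathbb{O}$ denotes the octonions, $\overline{a}$ conjugation, $\mathrm{Re}(a)=\frac12(a+\overline a)$, $\mathrm{Im}(a)=\frac12(a-\overline a)$, $|a|$ the norm, $[a,b,c]=(ab)c-a(bc)$ the associator, and $a\cdot b=\frac12(a\overline b+b\overline a)$ the Euclidean inner product of $\mathbb{R}^8$. $v\lambda$ means each component multiplied on the right by $\lambda$. *)

theory Defs
  imports Complex_Main
begin

text \<open>Doubling rule (Baez convention): (a,b)(c,d) = (ac - d* b, da + b c*),
  conjugate (a,b)* = (a*, -b).  Quaternions are pairs of complex numbers,
  octonions are pairs of quaternions.\<close>

datatype quat = Quat complex complex

instantiation quat :: "{zero, one, plus, minus, uminus, times}"
begin
definition "0 = Quat 0 0"
definition "1 = Quat 1 0"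
fun plus_quat where "Quat a b + Quat c d = Quat (a + c) (b + d)"
fun minus_quat where "Quat a b - Quat c d = Quat (a - c) (b - d)"
fun uminus_quat where "- Quat a b = Quat (- a) (- b)"
fun times_quat where "Quat a b * Quat c d = Quat (a * c - cnj d * b) (d * a + b * cnj c)"
instance ..
end

fun qcnj :: "quat \<Rightarrow> quat" where "qcnj (Quat a b) = Quat (cnj a) (- b)"

fun qnormsq :: "quat \<Rightarrow> real" where "qnormsq (Quat a b) = (cmod a)\<^sup>2 + (cmod b)\<^sup>2"

datatype oct = Oct quat quat

instantiation oct :: "{zero, one, plus, minus, uminus, times, scaleR}"
begin
definition "0 = Oct 0 0"
definition "1 = Oct 1 0"
fun plus_oct where "Oct a b + Oct c d = Oct (a + c) (b + d)"
fun minus_oct where "Oct a b - Oct c d = Oct (a - c) (b - d)"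
fun uminus_oct where "- Oct a b = Oct (- a) (- b)"
fun times_oct where "Oct a b * Oct c d = Oct (a * c - qcnj d * b) (d * a + b * qcnj c)"
fun scaleR_quat :: "real \<Rightarrow> quat \<Rightarrow> quat" where
  "scaleR_quat r (Quat a b) = Quat (complex_of_real r * a) (complex_of_real r * b)"
fun scaleR_oct where "scaleR_oct r (Oct a b) = Oct (scaleR_quat r a) (scaleR_quat r b)"
instance ..
end

fun ocnj :: "oct \<Rightarrow> oct" where "ocnj (Oct a b) = Oct (qcnj a) (- b)"

definition oreal :: "real \<Rightarrow> oct" where "oreal r = scaleR r 1"

text \<open>Real part: the real number r with \<open>oreal r = (a + ocnj a)/2\<close>.\<close>
fun ore :: "oct \<Rightarrow> real" where "ore (Oct (Quat z w) q) = Re z"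

definition oim :: "oct \<Rightarrow> oct" where "oim a = scaleR (1/2) (a - ocnj a)"

fun onorm :: "oct \<Rightarrow> real" where "onorm (Oct a b) = sqrt (qnormsq a + qnormsq b)"

definition assoc :: "oct \<Rightarrow> oct \<Rightarrow> oct \<Rightarrow> oct" where
  "assoc a b c = (a * b) * c - a * (b * c)"

definition oinner :: "oct \<Rightarrow> oct \<Rightarrow> real" where
  "oinner a b = ore (scaleR (1/2) (a * ocnj b + b * ocnj a))"

end

theory Submission
  imports Defs
begin

text \<open>Multiply the \<open>i\<close>-th eigen-equation on the left by the conjugate of the \<open>i\<close>-th component
  of \<open>v\<close>. Since \<open>\<overline>u(u\<lambda>) = |u|\<^sup>2\<lambda>\<close> in the alternative algebra \<open>\<bbbO>\<close>, summing the three products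
  gives \<open>|v|\<^sup>2\<lambda>\<close>. The diagonal contributions are real, and the off-diagonal ones pair up as
  \<open>\<overline>u(av) + \<overline>v(\<overline>a u)\<close>, which differs from the self-conjugate \<open>w + \<overline>w\<close>, \<open>w = \<overline>u(av)\<close>, by the
  purely imaginary associator \<open>[u,a,v]\<close>. This yields \<open>Im \<lambda>\<close>. Subtracting the third product
  instead of adding it yields \<open>Re \<lambda>\<close>, because the real parts of the two terms of a pair agree.\<close>

lemma oct_cases_complex: obtains a b c d where "x = Oct (Quat a b) (Quat c d)"
  by (metis oct.exhaust quat.exhaust)

lemma onorm_power2:
  "(onorm (Oct (Quat a b) (Quat c d)))\<^sup>2 =
     (Re a)\<^sup>2 + (Im a)\<^sup>2 + (Re b)\<^sup>2 + (Im b)\<^sup>2 + (Re c)\<^sup>2 + (Im c)\<^sup>2 + (Re d)\<^sup>2 + (Im d)\<^sup>2"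
  by (simp add: cmod_power2 add_nonneg_nonneg)

lemmas oct_coordinate_simps = zero_oct_def one_oct_def zero_quat_def one_quat_def
  oreal_def oim_def assoc_def oinner_def complex_eq_iff onorm_power2

declare onorm.simps [simp del]

instance oct :: ab_group_add
proof
  fix u v w :: oct
  show "u + v + w = u + (v + w)" "u + v = v + u" "0 + u = u" "- u + u = 0" "u - v = u + - v"
    by (cases u rule: oct_cases_complex; cases v rule: oct_cases_complex;
        cases w rule: oct_cases_complex; simp add: oct_coordinate_simps)+
qed

instance oct :: real_vector
proof
  fix r s :: real and u v :: oct
  show "r *\<^sub>R (u + v) = r *\<^sub>R u + r *\<^sub>R v" "(r + s) *\<^sub>R u = r *\<^sub>R u + s *\<^sub>R u"
    "r *\<^sub>R s *\<^sub>R u = (r * s) *\<^sub>R u" "1 *\<^sub>R u = u"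
    by (cases u rule: oct_cases_complex; cases v rule: oct_cases_complex;
        simp add: oct_coordinate_simps algebra_simps)+
qed

lemma oct_distrib_left: "u * (v + w) = u * v + u * (w :: oct)"
  by (cases u rule: oct_cases_complex; cases v rule: oct_cases_complex;
      cases w rule: oct_cases_complex; simp add: oct_coordinate_simps algebra_simps)

lemma oreal_mult: "oreal r * u = r *\<^sub>R u"
  by (cases u rule: oct_cases_complex) (simp add: oct_coordinate_simps)

lemma mult_oreal: "u * oreal r = r *\<^sub>R u"
  by (cases u rule: oct_cases_complex) (simp add: oct_coordinate_simps)

lemma ocnj_mult_mult_self: "ocnj u * (u * v) = (onorm u)\<^sup>2 *\<^sub>R v"
  by (cases u rule: oct_cases_complex; cases v rule: oct_cases_complex;
      simp add: oct_coordinate_simps; simp add: algebra_simps power2_eq_square)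

lemma onorm_eq_0_iff: "onorm u = 0 \<longleftrightarrow> u = 0"
  by (cases u rule: oct_cases_complex)
    (simp add: onorm.simps oct_coordinate_simps cmod_power2 add_nonneg_eq_0_iff)

lemma ocnj_add: "ocnj (u + v) = ocnj u + ocnj v"
  by (cases u rule: oct_cases_complex; cases v rule: oct_cases_complex) simp

lemma ocnj_scaleR: "ocnj (r *\<^sub>R u) = r *\<^sub>R ocnj u"
  by (cases u rule: oct_cases_complex) simp

lemma ocnj_ocnj [simp]: "ocnj (ocnj u) = u"
  by (cases u rule: oct_cases_complex) simp

lemma ocnj_oreal: "ocnj (oreal r) = oreal r"
  by (simp add: oct_coordinate_simps)

lemma ocnj_mult: "ocnj (u * v) = ocnj v * ocnj u"
  by (cases u rule: oct_cases_complex; cases v rule: oct_cases_complex;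
      simp add: oct_coordinate_simps algebra_simps)

lemma ocnj_assoc: "ocnj (assoc u v w) = - assoc u v w"
  by (cases u rule: oct_cases_complex; cases v rule: oct_cases_complex;
      cases w rule: oct_cases_complex; simp add: oct_coordinate_simps; simp add: algebra_simps)

lemma assoc_swap: "assoc w v u = - assoc u v w"
  by (cases u rule: oct_cases_complex; cases v rule: oct_cases_complex;
      cases w rule: oct_cases_complex; simp add: oct_coordinate_simps; simp add: algebra_simps)

lemma assoc_ocnj_ocnj: "assoc (ocnj u) (ocnj v) w = assoc u v w"
  by (cases u rule: oct_cases_complex; cases v rule: oct_cases_complex;
      cases w rule: oct_cases_complex; simp add: oct_coordinate_simps; simp add: algebra_simps)

lemma ore_add: "ore (u + v) = ore u + ore v"
  by (cases u rule: oct_cases_complex; cases v rule: oct_cases_complex) simp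

lemma ore_diff: "ore (u - v) = ore u - ore v"
  by (cases u rule: oct_cases_complex; cases v rule: oct_cases_complex) simp

lemma ore_uminus: "ore (- u) = - ore u"
  by (cases u rule: oct_cases_complex) simp

lemma ore_scaleR: "ore (r *\<^sub>R u) = r * ore u"
  by (cases u rule: oct_cases_complex) simp

lemma ore_ocnj: "ore (ocnj u) = ore u"
  by (cases u rule: oct_cases_complex) simp

lemma ore_oreal: "ore (oreal r) = r"
  by (simp add: oct_coordinate_simps)

lemma ore_ocnj_mult: "ore (ocnj u * w) = oinner u w"
  by (cases u rule: oct_cases_complex; cases w rule: oct_cases_complex;
      simp add: oct_coordinate_simps; simp add: algebra_simps)

lemma oim_add: "oim (u + v) = oim u + oim v"
  by (simp add: oim_def ocnj_add algebra_simps)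

lemma oim_scaleR: "oim (r *\<^sub>R u) = r *\<^sub>R oim u"
  by (simp add: oim_def ocnj_scaleR algebra_simps)

lemma oim_oreal: "oim (oreal r) = 0"
  by (simp add: oim_def ocnj_oreal)

lemma oim_add_ocnj: "oim (u + ocnj u) = 0"
  by (simp add: oim_def ocnj_add)

lemma oim_assoc: "oim (assoc u v w) = assoc u v w"
  by (simp add: oim_def ocnj_assoc scaleR_2 flip: scaleR_add_left)

lemma ore_assoc: "ore (assoc u v w) = 0"
  using ore_ocnj [of "assoc u v w"] by (simp add: ocnj_assoc ore_uminus)

lemma ocnj_mult_oreal_self: "ocnj u * (oreal r * u) = oreal (r * (onorm u)\<^sup>2)"
  by (simp add: oreal_mult flip: mult_oreal)
    (simp add: ocnj_mult_mult_self oreal_def mult.commute)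

lemma ocnj_mult_ocnj_mult:
  "ocnj v * (ocnj a * u) = ocnj (ocnj u * (a * v)) + assoc u a v"
proof -
  have "ocnj (ocnj u * (a * v)) = (ocnj v * ocnj a) * u"
    by (simp add: ocnj_mult)
  also have "\<dots> = ocnj v * (ocnj a * u) + assoc (ocnj v) (ocnj a) u"
    by (simp add: assoc_def)
  also have "assoc (ocnj v) (ocnj a) u = - assoc u a v"
    by (simp add: assoc_ocnj_ocnj assoc_swap [of v a u])
  finally show ?thesis
    by (simp add: algebra_simps)
qed

lemma ore_cross_terms_eq: "ore (ocnj v * (ocnj a * u)) = ore (ocnj u * (a * v))"
  by (simp add: ocnj_mult_ocnj_mult ore_add ore_ocnj ore_assoc)

text \<open>The contribution of an off-diagonal entry \<open>a\<close> at position \<open>(i,j)\<close> of a Hermitian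
  matrix \<open>A\<close>, together with \<open>\<overline>a\<close> at \<open>(j,i)\<close>, to \<open>\<Sum>\<^sub>k \<overline>v\<^sub>k (Av)\<^sub>k\<close>, where \<open>u = v\<^sub>i\<close> and \<open>v = v\<^sub>j\<close>.\<close>
definition offdiag_term :: "oct \<Rightarrow> oct \<Rightarrow> oct \<Rightarrow> oct" where
  "offdiag_term u a v = ocnj u * (a * v) + ocnj v * (ocnj a * u)"

lemma oim_offdiag_term: "oim (offdiag_term u a v) = assoc u a v"
proof -
  let ?w = "ocnj u * (a * v)"
  have "offdiag_term u a v = (?w + ocnj ?w) + assoc u a v"
    by (simp add: offdiag_term_def ocnj_mult_ocnj_mult)
  then show ?thesis
    using oim_add [of "?w + ocnj ?w" "assoc u a v"] by (simp add: oim_add_ocnj oim_assoc)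
qed

lemma ore_offdiag_term: "ore (offdiag_term u a v) = 2 * oinner u (a * v)"
  by (simp add: offdiag_term_def ore_add ore_cross_terms_eq) (simp add: ore_ocnj_mult)

lemma oim_hermitian_form:
  "oim (ocnj x * (oreal p * x + a * y + ocnj b * z)
      + ocnj y * (ocnj a * x + oreal m * y + c * z)
      + ocnj z * (b * x + ocnj c * y + oreal n * z))
   = assoc x a y + assoc z b x + assoc y c z"
proof -
  have "ocnj x * (oreal p * x + a * y + ocnj b * z)
      + ocnj y * (ocnj a * x + oreal m * y + c * z)
      + ocnj z * (b * x + ocnj c * y + oreal n * z)
    = oreal (p * (onorm x)\<^sup>2) + oreal (m * (onorm y)\<^sup>2) + oreal (n * (onorm z)\<^sup>2)
      + offdiag_term x a y + offdiag_term z b x + offdiag_term y c z"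
    by (simp add: offdiag_term_def oct_distrib_left ocnj_mult_oreal_self algebra_simps)
  then show ?thesis
    by (simp add: oim_add oim_oreal oim_offdiag_term)
qed

lemma ore_signed_hermitian_form:
  "ore (ocnj x * (oreal p * x + a * y + ocnj b * z)
      + ocnj y * (ocnj a * x + oreal m * y + c * z)
      - ocnj z * (b * x + ocnj c * y + oreal n * z))
   = p * (onorm x)\<^sup>2 + m * (onorm y)\<^sup>2 - n * (onorm z)\<^sup>2 + 2 * oinner x (a * y)"
proof -
  have "ocnj x * (oreal p * x + a * y + ocnj b * z)
      + ocnj y * (ocnj a * x + oreal m * y + c * z)
      - ocnj z * (b * x + ocnj c * y + oreal n * z)
    = oreal (p * (onorm x)\<^sup>2) + oreal (m * (onorm y)\<^sup>2) - oreal (n * (onorm z)\<^sup>2)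
      + offdiag_term x a y
      + (ocnj x * (ocnj b * z) - ocnj z * (b * x))
      + (ocnj y * (c * z) - ocnj z * (ocnj c * y))"
    by (simp add: offdiag_term_def oct_distrib_left ocnj_mult_oreal_self algebra_simps)
  then show ?thesis
    using ore_cross_terms_eq [of x b z] ore_cross_terms_eq [of z c y]
    by (simp add: ore_add ore_diff ore_oreal ore_offdiag_term)
qed

theorem mainTheorem6:
  fixes p m n :: real and a b c x y z lam :: oct
  assumes nz: "(x, y, z) \<noteq> (0, 0, 0)"
    and e1: "oreal p * x + a * y + ocnj b * z = x * lam"
    and e2: "ocnj a * x + oreal m * y + c * z = y * lam"
    and e3: "b * x + ocnj c * y + oreal n * z = z * lam"
  shows "oim lam = scaleR (1 / ((onorm x)\<^sup>2 + (onorm y)\<^sup>2 + (onorm z)\<^sup>2))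
                 (assoc x a y + assoc z b x + assoc y c z)
     \<and> ((onorm x)\<^sup>2 + (onorm y)\<^sup>2 \<noteq> (onorm z)\<^sup>2 \<longrightarrow>
           ore lam = (p * (onorm x)\<^sup>2 + m * (onorm y)\<^sup>2 - n * (onorm z)\<^sup>2 + 2 * oinner x (a * y))
                   / ((onorm x)\<^sup>2 + (onorm y)\<^sup>2 - (onorm z)\<^sup>2))
     \<and> ((onorm x)\<^sup>2 + (onorm y)\<^sup>2 + (onorm z)\<^sup>2 = 1 \<longrightarrow>
           oim lam = assoc x a y + assoc z b x + assoc y c z)"
proof -
  let ?N = "(onorm x)\<^sup>2 + (onorm y)\<^sup>2 + (onorm z)\<^sup>2"
  let ?S = "assoc x a y + assoc z b x + assoc y c z"
  have rows: "ocnj x * (oreal p * x + a * y + ocnj b * z) = (onorm x)\<^sup>2 *\<^sub>R lam"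
    "ocnj y * (ocnj a * x + oreal m * y + c * z) = (onorm y)\<^sup>2 *\<^sub>R lam"
    "ocnj z * (b * x + ocnj c * y + oreal n * z) = (onorm z)\<^sup>2 *\<^sub>R lam"
    unfolding e1 e2 e3 by (simp_all only: ocnj_mult_mult_self)
  have nonzero: "?N \<noteq> 0"
    using nz by (simp add: add_nonneg_eq_0_iff onorm_eq_0_iff)
  have scaled_im: "?N *\<^sub>R oim lam = ?S"
    using oim_hermitian_form [of x p a y b z m c n]
    by (simp add: rows oim_scaleR flip: scaleR_add_left)
  have im: "oim lam = (1 / ?N) *\<^sub>R ?S"
    unfolding scaled_im [symmetric] using nonzero by simp
  have re: "ore lam * ((onorm x)\<^sup>2 + (onorm y)\<^sup>2 - (onorm z)\<^sup>2)
      = p * (onorm x)\<^sup>2 + m * (onorm y)\<^sup>2 - n * (onorm z)\<^sup>2 + 2 * oinner x (a * y)"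
    using ore_signed_hermitian_form [of x p a y b z m c n]
    by (simp add: rows ore_scaleR mult.commute flip: scaleR_add_left scaleR_diff_left)
  show ?thesis
  proof (intro conjI impI)
    show "oim lam = (1 / ?N) *\<^sub>R ?S"
      by (fact im)
    show "ore lam = (p * (onorm x)\<^sup>2 + m * (onorm y)\<^sup>2 - n * (onorm z)\<^sup>2 + 2 * oinner x (a * y))
                   / ((onorm x)\<^sup>2 + (onorm y)\<^sup>2 - (onorm z)\<^sup>2)"
      if "(onorm x)\<^sup>2 + (onorm y)\<^sup>2 \<noteq> (onorm z)\<^sup>2"
      using that by (intro eq_divide_imp [OF _ re]) simp
    show "oim lam = ?S" if "?N = 1"
      using im that by simp
  qed
qed

end
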